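(* Let $n\ge1$, $\mathbf{k}=(k_1,\dots,k_n)$ positive integers, $N=n+|\mathbf{k}|$, and $D\in\mathcal{D}_{\mathbf{k}}$. Let $\sigma(D)=c_1c_2\cdots$ be the sequence of indices written by the Walking Algorithm on $(T(D),R(D))$. Then $\sigma(D)=c_1\cdots c_N$ is a permutation of $\{1,\dots,N\}$, and if $\overline{D}$ denotes the path whose $j$-th step is the $c_j$-th step of $D$ (i.e. $\texttt{SW}(\overline D)=\sigma_{c_1}\cdots\sigma_{c_N}$ where $\texttt{SW}(D)=\sigma_1\cdots\sigma_N$), then $\overline{D}\in\mathcal{D}_{\mathbf{k}'}$ for some permutation $\mathbf{k}'$ of $\mathbf{k}$, $\Phi(\overline D)=D$, and the sweep map sends the $j$-th step of $\overline D$ to the $c_j$-th step of $D$ for every $j$.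
   Context: $|\mathbf{k}|=k_1+\cdots+k_n$. $\mathcal{D}_{\mathbf{k}}$: sequences $(a_1,\dots,a_N)$ whose positive entries are $k_1,\dots,k_n$ in order, other entries $-1$, with all partial sums $r_i=a_1+\cdots+a_{i-1}$ (the rank of step $i$) nonnegative. SW-word: letter $S^{k_j}$ for up step $k_j$, $W$ for $-1$. Sweep map: for $D=(a_1,\dots,a_N)$ let $\pi$ list positions by increasing rank, ties by decreasing position; $\Phi(D)=(a_{\pi(1)},\dots,a_{\pi(N)})$ (step $\pi(j)$ goes to position $j$). Filling Algorithm: $T(D)$ has $n$ columns, column $i$ with $k_i+1$ cells in rows $1,\dots,k_i+1$. Place $1$ at top of column 1; having placed $1,\dots,i-1$, the lowest filled entry of column $j$ is active if not in row $k_j+1$; if the $i$-th letter of $\texttt{SW}(D)$ is $W$ place $i$ below the smallest active entry, else at the top of the leftmost empty column; continue until $1,\dots,N$ placed. The numbers in $T(D)$ are called indices; $t_i$ is the top index of column $i$. Ranking Algorithm: $R(D)$ has the shape of $T(D)$ and assigns each index a rank: column 1 indices get ranks $0,1,\dots,k_1$ top to bottom; for $i=2,\dots,n$, if index $t_i-1$ has rank $a$, column $i$ indices get ranks $a,a+1,\dots,a+k_i$ top to bottom. Among boxes of equal rank $r$, the largest one is the one with largest index. Walking Algorithm: go to the largest rank-$0$ box, mark it and write its index. Then repeat: if the current box is in row $1$ of column $i$, let $r$ be the rank of the bottom box (row $k_i+1$) of column $i$; otherwise let $r$ be the rank of the box directly above the current box. If there is an unmarked box of rank $r$, go to the unmarked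 rank-$r$ box with largest index, mark it and write its index; otherwise stop. *)

theory Defs
  imports Main "HOL-Library.Multiset" "HOL-Library.Product_Lexorder"
begin

(* Paths are int lists (a_1,...,a_N), stored 0-based: step i (1-based) is D ! (i-1).
   Compositions k = (k_1,...,k_n) are nat lists. *)

definition Dpaths :: "nat list \<Rightarrow> int list set" where
  "Dpaths k = {D. length D = length k + sum_list k
      \<and> filter (\<lambda>a. a > 0) D = map int k
      \<and> (\<forall>a\<in>set D. a > 0 \<or> a = -1)
      \<and> (\<forall>i<length D. sum_list (take i D) \<ge> 0)}"

definition step_rank :: "int list \<Rightarrow> nat \<Rightarrow> int" where
  "step_rank D i = sum_list (take i D)"

definition sweep_order :: "int list \<Rightarrow> nat list" where
  "sweep_order D = sort_key (\<lambda>i. (step_rank D i, - int i)) [0..<length D]"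

definition sweep :: "int list \<Rightarrow> int list" where
  "sweep D = map (\<lambda>i. D ! i) (sweep_order D)"

(* Filling algorithm. A tableau is a list of columns (0-based); each column is the
   list of its indices from top (row 1) to bottom. Letter i of SW(D) is S iff a_i > 0. *)
definition fill_step :: "nat list \<Rightarrow> nat list list \<Rightarrow> nat \<times> int \<Rightarrow> nat list list" where
  "fill_step k cols ia = (let i = fst ia; a = snd ia in
     if a > 0 then cols[(LEAST j. j < length cols \<and> cols ! j = []) := [i]]
     else (let j = arg_min (\<lambda>j. last (cols ! j))
                  (\<lambda>j. j < length cols \<and> cols ! j \<noteq> [] \<and> length (cols ! j) < k ! j + 1)
           in cols[j := cols ! j @ [i]]))"

definition filling :: "nat list \<Rightarrow> int list \<Rightarrow> nat list list" where
  "filling k D = foldl (fill_step k) (replicate (length k) []) (zip [1..<length D + 1] D)"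

definition col_of :: "nat list list \<Rightarrow> nat \<Rightarrow> nat" where
  "col_of T x = (LEAST c. c < length T \<and> x \<in> set (T ! c))"

definition row_of :: "nat list list \<Rightarrow> nat \<Rightarrow> nat" where
  "row_of T x = (LEAST r. r < length (T ! col_of T x) \<and> T ! col_of T x ! r = x)"

(* Ranking algorithm: rank of the top box of each column *)
fun col_starts :: "nat list list \<Rightarrow> nat \<Rightarrow> nat list" where
  "col_starts T 0 = [0]"
| "col_starts T (Suc i) = (let acc = col_starts T i; x = hd (T ! Suc i) - 1; c = col_of T x
     in acc @ [if c < length acc then acc ! c + row_of T x else 0])"

definition rank_box :: "nat list list \<Rightarrow> nat \<Rightarrow> nat \<Rightarrow> nat" where
  "rank_box T c r = col_starts T (length T - 1) ! c + r"

definition rank_idx :: "nat list list \<Rightarrow> nat \<Rightarrow> nat" where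
  "rank_idx T x = rank_box T (col_of T x) (row_of T x)"

(* the rank r used by the Walking Algorithm after visiting index x *)
definition next_rank :: "nat list \<Rightarrow> nat list list \<Rightarrow> nat \<Rightarrow> nat" where
  "next_rank k T x = (if row_of T x = 0 then rank_box T (col_of T x) (k ! col_of T x)
                      else rank_box T (col_of T x) (row_of T x - 1))"

(* Walking algorithm with fuel; the marked boxes are those already written *)
fun walk :: "nat list \<Rightarrow> nat list list \<Rightarrow> nat \<Rightarrow> nat \<Rightarrow> nat list \<Rightarrow> nat list" where
  "walk k T N 0 acc = acc"
| "walk k T N (Suc f) acc = (let r = next_rank k T (last acc);
      C = {x \<in> {1..N}. rank_idx T x = r \<and> x \<notin> set acc}
    in if C = {} then acc else walk k T N f (acc @ [Max C]))"

(* sigma(D): fuel N is enough, since at most N boxes can be marked *)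
definition walk_word :: "nat list \<Rightarrow> int list \<Rightarrow> nat list" where
  "walk_word k D = (let T = filling k D; N = length D
     in walk k T N N [Max {x \<in> {1..N}. rank_idx T x = 0}])"

end

(* Column c of the filling is headed by the c-th up step of D and continued downwards by down
   steps, and visiting index y takes the walk from its rank to rank + a_y.  Two facts drive the
   proof.  First, the rank is weakly increasing in the index, because a down step is always put
   below the smallest active entry.  Second, reading index y as an edge from its rank to its rank
   + a_y, every column contributes the same ranks at both ends, so this multigraph is balanced and
   the walk is a trail from rank 0 that can only get stuck back at rank 0, leaving a balanced set of
   unused edges.  If some edge were unused, take one of minimal rank r > 0: since the walk always
   takes the largest available index, the smallest index of rank r is unused too, and it is a down
   step, i.e. an unused edge into r - 1; by balance some unused edge leaves r - 1, contradicting
   minimality.  So sigma is a permutation, the j-th step of Dbar has rank rank(c_j), and as the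
   walk visits equal ranks in decreasing order of index, sweeping Dbar puts that step back at c_j. *)

theory Submission
  imports Defs
begin

lemma sum_list_up_down:
  fixes xs :: "int list"
  assumes "\<forall>a\<in>set xs. a > 0 \<or> a = -1"
  shows "sum_list xs = sum_list (filter (\<lambda>a. a > 0) xs) - int (length (filter (\<lambda>a. \<not> a > 0) xs))"
  using assms by (induction xs) auto

lemma map_int_nat_filter_pos: "map int (map nat (filter (\<lambda>a. a > 0) xs)) = filter (\<lambda>a. (a::int) > 0) xs"
  by (induction xs) auto

lemma mset_concat_snoc_at:
  "j < length xs \<Longrightarrow> mset (concat (xs[j := xs ! j @ [y]])) = mset (concat xs) + {#y#}"
proof (induction xs arbitrary: j)
  case (Cons a xs)
  then show ?case by (cases j) auto
qed simp

lemma snoc_column_mset_sorted: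
  fixes F :: "nat list list"
  assumes "j < length F" and perm: "mset (concat F) = mset [1..<Suc x]"
    and sorted: "\<forall>c<length F. sorted (F ! c)"
  shows "mset (concat (F[j := F ! j @ [Suc x]])) = mset [1..<Suc (Suc x)]"
    and "\<forall>c<length F. sorted (F[j := F ! j @ [Suc x]] ! c)"
proof -
  show "mset (concat (F[j := F ! j @ [Suc x]])) = mset [1..<Suc (Suc x)]"
    using mset_concat_snoc_at[OF assms(1)] perm by simp
  have "set (F ! j) \<subseteq> set (concat F)" using nth_mem[OF assms(1)] by auto
  also have "\<dots> = {1..x}" by (metis perm atLeastLessThanSuc_atLeastAtMost set_mset_mset set_upt)
  finally have "\<forall>y\<in>set (F ! j). y \<le> Suc x" by auto
  then have "sorted (F ! j @ [Suc x])" using sorted assms(1) by (simp add: sorted_append)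
  then show "\<forall>c<length F. sorted (F[j := F ! j @ [Suc x]] ! c)"
    using sorted assms(1) by (auto simp: nth_list_update)
qed

lemma distinct_concat_unique_index:
  assumes "distinct (concat xs)" "i < length xs" "j < length xs"
    and "y \<in> set (xs ! i)" "y \<in> set (xs ! j)"
  shows "i = j"
  using assms
proof (induction xs arbitrary: i j)
  case (Cons a xs)
  have "y \<in> set (concat xs)" if "y \<in> set (xs ! m)" "m < length xs" for m
    using that nth_mem by fastforce
  then show ?case
    using Cons by (cases i; cases j) auto
qed simp

lemma mono_on_atLeastAtMost_Suc:
  fixes f :: "nat \<Rightarrow> 'a::order"
  assumes mono: "mono_on {a..x} f" and "f x \<le> f (Suc x)" and "a \<le> x"
  shows "mono_on {a..Suc x} f"
proof (rule mono_onI)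
  fix r s assume r: "r \<in> {a..Suc x}" and s: "s \<in> {a..Suc x}" and "r \<le> s"
  show "f r \<le> f s"
  proof (cases "s = Suc x")
    case True
    show ?thesis
    proof (cases "r = Suc x")
      case False
      then have "f r \<le> f x" using mono_onD[OF mono] r \<open>a \<le> x\<close> by auto
      then show ?thesis using True assms(2) by simp
    qed (use True in simp)
  next
    case False
    then show ?thesis using mono_onD[OF mono] r s \<open>r \<le> s\<close> by auto
  qed
qed

lemma image_mset_concat_cong:
  "(\<And>xs. xs \<in> set xss \<Longrightarrow> image_mset f (mset xs) = image_mset g (mset xs))
   \<Longrightarrow> image_mset f (mset (concat xss)) = image_mset g (mset (concat xss))"
  by (induction xss) auto

lemma sum_cong_except:
  fixes f g :: "'a \<Rightarrow> 'b::comm_monoid_add"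
  assumes "finite A" "j \<in> A" "\<And>c. c \<in> A \<Longrightarrow> c \<noteq> j \<Longrightarrow> f c = g c"
  shows "sum f A + g j = sum g A + f j"
proof -
  have "sum f (A - {j}) = sum g (A - {j})" using assms(3) by (intro sum.cong) auto
  then show ?thesis using assms(1,2) by (simp add: sum.remove ac_simps)
qed

section \<open>Balanced multigraphs\<close>

lemma mset_chain:
  assumes "W \<noteq> []" and chain: "\<forall>i. Suc i < length W \<longrightarrow> f (W ! Suc i) = g (W ! i)"
  shows "image_mset f (mset W) + {#g (last W)#} = image_mset g (mset W) + {#f (hd W)#}"
proof -
  have f_W: "map f W = f (hd W) # map g (butlast W)"
  proof (rule nth_equalityI)
    fix i assume "i < length (map f W)"
    then show "map f W ! i = (f (hd W) # map g (butlast W)) ! i"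
      using assms by (cases i) (auto simp: nth_butlast hd_conv_nth)
  qed (use assms in simp)
  have g_W: "map g W = map g (butlast W) @ [g (last W)]"
    using assms(1) by (cases W rule: rev_cases) auto
  have "image_mset f (mset W) = add_mset (f (hd W)) (mset (map g (butlast W)))"
    unfolding mset_map[symmetric] f_W by simp
  moreover have "image_mset g (mset W) = add_mset (g (last W)) (mset (map g (butlast W)))"
    unfolding mset_map[symmetric] g_W by simp
  ultimately show ?thesis by simp
qed

text \<open>Read \<open>y \<in> V\<close> as an edge from \<open>f y\<close> to \<open>g y\<close> of a multigraph in which every vertex has
  equal in- and out-degree.\<close>
lemma stuck_trail_closed:
  assumes V: "finite V"
    and balanced: "image_mset f (mset_set V) = image_mset g (mset_set V)"
    and W: "distinct W" "set W \<subseteq> V" "W \<noteq> []"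
    and chain: "\<forall>i. Suc i < length W \<longrightarrow> f (W ! Suc i) = g (W ! i)"
    and stuck: "\<forall>y\<in>V. f y = g (last W) \<longrightarrow> y \<in> set W"
  shows "g (last W) = f (hd W)"
    and "image_mset f (mset_set (V - set W)) = image_mset g (mset_set (V - set W))"
proof -
  define U where "U = mset_set (V - set W)"
  define v where "v = g (last W)"
  have split: "mset_set V = mset W + U"
    using W V mset_set_Union[of "set W" "V - set W"] unfolding U_def
    by (simp add: Un_absorb1 mset_set_set)
  have "v \<notin># image_mset f U"
    using stuck V unfolding U_def v_def by auto
  then have unused_v: "count (image_mset f U) v = 0"
    by (simp only: not_in_iff)
  have trail: "image_mset f (mset W) + {#v#} = image_mset g (mset W) + {#f (hd W)#}"
    unfolding v_def by (rule mset_chain[OF W(3) chain])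
  show closed: "v = f (hd W)"
  proof (rule ccontr)
    assume "v \<noteq> f (hd W)"
    then have "count (image_mset g (mset W)) v = count (image_mset f (mset W)) v + 1"
      using arg_cong[OF trail, of "\<lambda>M. count M v"] by simp
    also have "count (image_mset f (mset W)) v = count (image_mset f (mset_set V)) v"
      using split unused_v by simp
    also have "\<dots> = count (image_mset g (mset W)) v + count (image_mset g U) v"
      using balanced split by simp
    finally show False by simp
  qed
  then have "image_mset f (mset W) = image_mset g (mset W)"
    using trail by simp
  then show "image_mset f (mset_set (V - set W)) = image_mset g (mset_set (V - set W))"
    using balanced split unfolding U_def by simp
qed

section \<open>The walking algorithm\<close>

definition walk_inv :: "nat list \<Rightarrow> nat list list \<Rightarrow> nat \<Rightarrow> nat list \<Rightarrow> bool" where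
  "walk_inv k T N acc \<longleftrightarrow> acc \<noteq> [] \<and> distinct acc \<and> set acc \<subseteq> {1..N}
     \<and> (\<forall>i. Suc i < length acc \<longrightarrow> rank_idx T (acc ! Suc i) = next_rank k T (acc ! i))
     \<and> (\<forall>i<length acc. \<forall>y \<in> {1..N} - set (take i acc).
          rank_idx T y = rank_idx T (acc ! i) \<longrightarrow> y \<le> acc ! i)"

lemma walk_inv_length: "walk_inv k T N acc \<Longrightarrow> length acc \<le> N"
  unfolding walk_inv_def by (metis card_atLeastAtMost card_mono diff_Suc_1 distinct_card finite_atLeastAtMost)

lemma walk_inv_snoc:
  assumes inv: "walk_inv k T N acc"
    and C: "C = {x \<in> {1..N}. rank_idx T x = next_rank k T (last acc) \<and> x \<notin> set acc}"
    and "C \<noteq> {}"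
  shows "walk_inv k T N (acc @ [Max C])"
proof -
  let ?acc' = "acc @ [Max C]"
  have fin: "finite C" using C by simp
  have max_C: "Max C \<in> C" using Max_in[OF fin \<open>C \<noteq> {}\<close>] .
  have "acc \<noteq> []" using inv unfolding walk_inv_def by simp
  have chain': "rank_idx T (?acc' ! Suc i) = next_rank k T (?acc' ! i)"
    if "Suc i < length ?acc'" for i
  proof (cases "Suc i < length acc")
    case True
    then show ?thesis using inv unfolding walk_inv_def by (simp add: nth_append)
  next
    case False
    then have "i = length acc - 1" "Suc i = length acc" using that by auto
    then show ?thesis
      using max_C C \<open>acc \<noteq> []\<close> by (simp add: nth_append last_conv_nth)
  qed
  have greedy': "y \<le> ?acc' ! i"
    if "i < length ?acc'" "y \<in> {1..N} - set (take i ?acc')"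
      "rank_idx T y = rank_idx T (?acc' ! i)" for i y
  proof (cases "i < length acc")
    case True
    then show ?thesis using inv that unfolding walk_inv_def by (simp add: nth_append)
  next
    case False
    then have "i = length acc" using that(1) by simp
    then have "y \<in> C" using that max_C C by simp
    then show ?thesis using Max_ge[OF fin] \<open>i = length acc\<close> by simp
  qed
  show ?thesis
    using inv max_C C chain' greedy' unfolding walk_inv_def by simp
qed

lemma walk_append: "\<exists>ys. walk k T N f acc = acc @ ys"
proof (induction f arbitrary: acc)
  case (Suc f)
  then show ?case by (simp add: Let_def) (metis append.assoc)
qed simp

lemma walk_inv_walk:
  assumes "walk_inv k T N acc" and "N < length acc + f"
  shows "walk_inv k T N (walk k T N f acc)"
    and "\<forall>y\<in>{1..N}. rank_idx T y = next_rank k T (last (walk k T N f acc))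
           \<longrightarrow> y \<in> set (walk k T N f acc)"
proof -
  have "walk_inv k T N (walk k T N f acc) \<and>
    (\<forall>y\<in>{1..N}. rank_idx T y = next_rank k T (last (walk k T N f acc))
       \<longrightarrow> y \<in> set (walk k T N f acc))"
    using assms
  proof (induction f arbitrary: acc)
    case 0
    then show ?case using walk_inv_length by fastforce
  next
    case (Suc f)
    define C where "C = {x \<in> {1..N}. rank_idx T x = next_rank k T (last acc) \<and> x \<notin> set acc}"
    have step: "walk k T N (Suc f) acc = (if C = {} then acc else walk k T N f (acc @ [Max C]))"
      unfolding C_def by (simp only: walk.simps Let_def)
    show ?case
    proof (cases "C = {}")
      case True
      then have "walk k T N (Suc f) acc = acc" using step by simp
      then show ?thesis using Suc.prems True unfolding C_def by auto
    next
      case False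
      then show ?thesis
        using Suc.IH[OF walk_inv_snoc[OF Suc.prems(1) C_def False]] Suc.prems(2) step by simp
    qed
  qed
  then show "walk_inv k T N (walk k T N f acc)"
    and "\<forall>y\<in>{1..N}. rank_idx T y = next_rank k T (last (walk k T N f acc))
           \<longrightarrow> y \<in> set (walk k T N f acc)" by auto
qed

lemma walk_inv_same_rank_decreasing:
  assumes inv: "walk_inv k T N acc" and "i < j" "j < length acc"
    and "rank_idx T (acc ! i) = rank_idx T (acc ! j)"
  shows "acc ! j < acc ! i"
proof -
  have "distinct acc" using inv unfolding walk_inv_def by simp
  have j_in: "acc ! j \<in> {1..N}"
    using inv assms(3) unfolding walk_inv_def by (meson nth_mem subsetD)
  have not_before: "acc ! j \<notin> set (take i acc)" and "acc ! j \<noteq> acc ! i"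
    using assms \<open>distinct acc\<close> by (auto simp: in_set_conv_nth nth_eq_iff_index_eq)
  have greedy: "\<forall>y \<in> {1..N} - set (take i acc). rank_idx T y = rank_idx T (acc ! i) \<longrightarrow> y \<le> acc ! i"
    using inv assms(2,3) unfolding walk_inv_def by (meson order.strict_trans)
  have "acc ! j \<le> acc ! i"
    by (rule greedy[rule_format, OF DiffI[OF j_in not_before] assms(4)[symmetric]])
  then show ?thesis using \<open>acc ! j \<noteq> acc ! i\<close> by simp
qed

lemma walk_inv_unvisited_below:
  assumes inv: "walk_inv k T N acc" and y: "y \<in> {1..N} - set acc" and "m \<in> set acc"
    and "rank_idx T y = rank_idx T m"
  shows "y < m"
proof -
  obtain i where i: "i < length acc" "acc ! i = m"
    using \<open>m \<in> set acc\<close> by (auto simp: in_set_conv_nth)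
  have "y \<notin> set (take i acc)" using y by (auto dest: in_set_takeD)
  then have "y \<le> m" using inv y i assms(4) unfolding walk_inv_def by auto
  then show ?thesis using y \<open>m \<in> set acc\<close> by (metis DiffE nat_less_le)
qed

section \<open>The filling algorithm\<close>

locale dyck_path =
  fixes k :: "nat list" and D :: "int list"
  assumes k_nonempty: "length k \<ge> 1" and k_pos: "\<forall>x\<in>set k. x > 0" and D_path: "D \<in> Dpaths k"
begin

abbreviation n :: nat where "n \<equiv> length k"
abbreviation N :: nat where "N \<equiv> length D"
abbreviation height :: "nat \<Rightarrow> int" where "height x \<equiv> sum_list (take x D)"

lemma length_D: "N = n + sum_list k"
  and filter_pos_D: "filter (\<lambda>a. a > 0) D = map int k"
  and height_nonneg: "x < N \<Longrightarrow> height x \<ge> 0"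
  using D_path unfolding Dpaths_def by auto

lemma step_cases: "x < N \<Longrightarrow> D ! x > 0 \<or> D ! x = -1"
  using D_path nth_mem[of x D] unfolding Dpaths_def by blast

lemma height_Suc: "x < N \<Longrightarrow> height (Suc x) = height x + D ! x"
  by (simp add: take_Suc_conv_app_nth)

lemma height_N: "height N = 0"
proof -
  have "length (filter (\<lambda>a. a > 0) D) + length (filter (\<lambda>a. \<not> a > 0) D) = N"
    by (rule sum_length_filter_compl)
  moreover have "length (filter (\<lambda>a. a > 0) D) = n" "sum_list (filter (\<lambda>a. a > 0) D) = int (sum_list k)"
    using filter_pos_D by (simp_all add: sum_list_of_nat)
  moreover have "\<forall>a\<in>set D. a > 0 \<or> a = -1" using D_path unfolding Dpaths_def by simp
  ultimately show ?thesis using sum_list_up_down[of D] length_D by simp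
qed

lemma height_before_down:
  assumes "x < N" "\<not> D ! x > 0"
  shows "height x \<ge> 1"
proof -
  have "height (Suc x) \<ge> 0"
  proof (cases "Suc x = N")
    case True
    then show ?thesis using height_N by simp
  next
    case False
    then show ?thesis using height_nonneg assms(1) by simp
  qed
  moreover have "D ! x = -1" using step_cases assms by blast
  ultimately show ?thesis using height_Suc[OF assms(1)] by simp
qed

lemma n_pos: "0 < n"
  using k_nonempty by linarith

lemma N_ge_2: "N \<ge> 2"
proof -
  have "k ! 0 \<in> set k" using k_nonempty by (cases k) auto
  then have "sum_list k \<ge> 1" using k_pos elem_le_sum_list[of 0 k] k_nonempty by fastforce
  then show ?thesis using length_D k_nonempty by simp
qed

lemma D_nonempty: "D \<noteq> []"
  using N_ge_2 by (cases D) auto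

lemma first_step_up: "D ! 0 > 0"
  using step_cases[of 0] height_Suc[of 0] height_nonneg[of 1] N_ge_2 D_nonempty by auto

definition ups :: "nat \<Rightarrow> nat" where
  "ups x = length (filter (\<lambda>a. a > 0) (take x D))"

lemma ups_0: "ups 0 = 0"
  by (simp add: ups_def)

lemma ups_Suc: "x < N \<Longrightarrow> ups (Suc x) = ups x + (if D ! x > 0 then 1 else 0)"
  by (simp add: ups_def take_Suc_conv_app_nth)

lemma ups_1: "ups 1 = 1"
  using ups_Suc[of 0] ups_0 first_step_up D_nonempty by simp

lemma ups_mono: "x \<le> y \<Longrightarrow> ups x \<le> ups y"
  unfolding ups_def by (metis filter_append le_add_diff_inverse length_append le_add1 take_add)

lemma ups_N: "ups N = n"
  using filter_pos_D by (simp add: ups_def)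

lemma up_step:
  assumes "x < N" "D ! x > 0"
  shows "ups x < n" and "D ! x = int (k ! ups x)"
proof -
  have "D = take x D @ D ! x # drop (Suc x) D"
    using assms(1) by (rule id_take_nth_drop)
  then have "map int k = filter (\<lambda>a. a > 0) (take x D) @ D ! x # filter (\<lambda>a. a > 0) (drop (Suc x) D)"
    using filter_pos_D assms(2) by (metis filter.simps(2) filter_append)
  then have "map int k ! ups x = D ! x" and "ups x < length (map int k)"
    unfolding ups_def by (simp_all add: nth_append)
  then show "ups x < n" and "D ! x = int (k ! ups x)" by auto
qed

definition fill :: "nat \<Rightarrow> nat list list" where
  "fill x = foldl (fill_step k) (replicate n []) (zip [1..<x + 1] (take x D))"

lemma fill_0: "fill 0 = replicate n []"
  by (simp add: fill_def)

lemma fill_Suc: "x < N \<Longrightarrow> fill (Suc x) = fill_step k (fill x) (Suc x, D ! x)"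
  by (simp add: fill_def take_Suc_conv_app_nth zip_append)

definition active :: "nat \<Rightarrow> nat \<Rightarrow> bool" where
  "active x j \<longleftrightarrow> j < length (fill x) \<and> fill x ! j \<noteq> [] \<and> length (fill x ! j) < k ! j + 1"

definition down_col :: "nat \<Rightarrow> nat" where
  "down_col x = arg_min (\<lambda>j. last (fill x ! j)) (active x)"

text \<open>By the last conjunct the height of the path is the number of free cells in the columns
  started so far, so a down step always finds an active column.\<close>
definition fill_inv :: "nat \<Rightarrow> bool" where
  "fill_inv x \<longleftrightarrow> length (fill x) = n
   \<and> (\<forall>c<n. fill x ! c = [] \<longleftrightarrow> ups x \<le> c)
   \<and> (\<forall>c<n. length (fill x ! c) \<le> k ! c + 1)
   \<and> mset (concat (fill x)) = mset [1..<Suc x]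
   \<and> (\<forall>c<n. sorted (fill x ! c))
   \<and> (\<forall>c<ups x. D ! (hd (fill x ! c) - 1) > 0 \<and> ups (hd (fill x ! c) - 1) = c)
   \<and> (\<forall>c<n. \<forall>y\<in>set (tl (fill x ! c)). D ! (y - 1) = -1)
   \<and> height x = int (\<Sum>c<ups x. k ! c + 1 - length (fill x ! c))"

lemma fill_inv_0: "fill_inv 0"
  by (simp add: fill_inv_def fill_0 ups_0)

lemma fill_Suc_up:
  assumes "x < N" "D ! x > 0" "fill_inv x"
  shows "fill (Suc x) = (fill x)[ups x := [Suc x]]" and "fill x ! ups x = []" and "ups x < n"
proof -
  show "ups x < n" using up_step assms(1,2) by simp
  moreover have empty: "\<forall>c<n. fill x ! c = [] \<longleftrightarrow> ups x \<le> c" and "length (fill x) = n"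
    using assms(3) unfolding fill_inv_def by auto
  ultimately show "fill x ! ups x = []" by simp
  have "(LEAST j. j < length (fill x) \<and> fill x ! j = []) = ups x"
    by (rule Least_equality) (use empty \<open>ups x < n\<close> \<open>length (fill x) = n\<close> in auto)
  then show "fill (Suc x) = (fill x)[ups x := [Suc x]]"
    using assms fill_Suc by (simp add: fill_step_def)
qed

lemma fill_Suc_down:
  assumes "x < N" "\<not> D ! x > 0" "fill_inv x"
  shows "fill (Suc x) = (fill x)[down_col x := fill x ! down_col x @ [Suc x]]"
    and "active x (down_col x)"
    and "\<And>c. active x c \<Longrightarrow> last (fill x ! down_col x) \<le> last (fill x ! c)"
proof -
  have empty: "\<forall>c<n. fill x ! c = [] \<longleftrightarrow> ups x \<le> c" and "length (fill x) = n"
    and height: "height x = int (\<Sum>c<ups x. k ! c + 1 - length (fill x ! c))"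
    using assms(3) unfolding fill_inv_def by auto
  have "(\<Sum>c<ups x. k ! c + 1 - length (fill x ! c)) \<noteq> 0"
    using height height_before_down[OF assms(1,2)] by linarith
  then obtain c where "c < ups x" "k ! c + 1 - length (fill x ! c) \<noteq> 0"
    by (meson lessThan_iff sum.neutral)
  moreover have "ups x \<le> n" using ups_mono[of x N] ups_N assms(1) by simp
  ultimately have "active x c"
    using empty \<open>length (fill x) = n\<close> unfolding active_def by auto
  from arg_min_nat_lemma[of "active x", OF this, of "\<lambda>j. last (fill x ! j)"]
  show "active x (down_col x)"
    and "\<And>c. active x c \<Longrightarrow> last (fill x ! down_col x) \<le> last (fill x ! c)"
    unfolding down_col_def by auto
  have "fill (Suc x) = fill_step k (fill x) (Suc x, D ! x)"
    by (rule fill_Suc[OF assms(1)])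
  also have "\<dots> = (fill x)[down_col x := fill x ! down_col x @ [Suc x]]"
    unfolding fill_step_def down_col_def active_def Let_def fst_conv snd_conv if_not_P[OF assms(2)]
    by (rule refl)
  finally show "fill (Suc x) = (fill x)[down_col x := fill x ! down_col x @ [Suc x]]" .
qed

lemma fill_inv_Suc_up:
  assumes x: "x < N" and up: "D ! x > 0" and inv: "fill_inv x"
  shows "fill_inv (Suc x)"
proof -
  let ?F = "fill x" and ?G = "fill (Suc x)" and ?u = "ups x"
  have len: "length ?F = n" and empty: "\<forall>c<n. ?F ! c = [] \<longleftrightarrow> ?u \<le> c"
    and col_len: "\<forall>c<n. length (?F ! c) \<le> k ! c + 1"
    and perm: "mset (concat ?F) = mset [1..<Suc x]" and sorted: "\<forall>c<n. sorted (?F ! c)"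
    and heads: "\<forall>c<?u. D ! (hd (?F ! c) - 1) > 0 \<and> ups (hd (?F ! c) - 1) = c"
    and tails: "\<forall>c<n. \<forall>y\<in>set (tl (?F ! c)). D ! (y - 1) = -1"
    and height: "height x = int (\<Sum>c<?u. k ! c + 1 - length (?F ! c))"
    using inv unfolding fill_inv_def by auto
  note G = fill_Suc_up[OF x up inv]
  have ups_Suc_x: "ups (Suc x) = Suc ?u" using ups_Suc[OF x] up by simp
  have G_nth: "?G ! c = (if c = ?u then [Suc x] else ?F ! c)" for c
    using G len by simp
  have len_G: "length ?G = n" using G len by simp
  have empty_G: "\<forall>c<n. ?G ! c = [] \<longleftrightarrow> ups (Suc x) \<le> c"
    using empty ups_Suc_x by (auto simp: G_nth)
  have col_len_G: "\<forall>c<n. length (?G ! c) \<le> k ! c + 1"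
    using col_len by (simp add: G_nth)
  have perm_sorted_G: "mset (concat ?G) = mset [1..<Suc (Suc x)]" "\<forall>c<n. sorted (?G ! c)"
    using snoc_column_mset_sorted[of ?u ?F x] G len perm sorted by auto
  have heads_G: "\<forall>c<ups (Suc x). D ! (hd (?G ! c) - 1) > 0 \<and> ups (hd (?G ! c) - 1) = c"
    using heads up ups_Suc_x by (auto simp: G_nth less_Suc_eq)
  have tails_G: "\<forall>c<n. \<forall>y\<in>set (tl (?G ! c)). D ! (y - 1) = -1"
    using tails by (simp add: G_nth)
  have "(\<Sum>c<?u. k ! c + 1 - length (?G ! c)) = (\<Sum>c<?u. k ! c + 1 - length (?F ! c))"
    by (intro sum.cong) (auto simp: G_nth)
  then have "(\<Sum>c<ups (Suc x). k ! c + 1 - length (?G ! c))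
      = (\<Sum>c<?u. k ! c + 1 - length (?F ! c)) + k ! ?u"
    using ups_Suc_x by (simp add: G_nth)
  then have height_G: "height (Suc x) = int (\<Sum>c<ups (Suc x). k ! c + 1 - length (?G ! c))"
    using height_Suc[OF x] height up_step(2)[OF x up] by simp
  show ?thesis unfolding fill_inv_def by (intro conjI len_G empty_G col_len_G perm_sorted_G heads_G tails_G height_G)
qed

lemma fill_inv_Suc_down:
  assumes x: "x < N" and down: "\<not> D ! x > 0" and inv: "fill_inv x"
  shows "fill_inv (Suc x)"
proof -
  let ?F = "fill x" and ?G = "fill (Suc x)" and ?j = "down_col x"
  have len: "length ?F = n" and empty: "\<forall>c<n. ?F ! c = [] \<longleftrightarrow> ups x \<le> c"
    and col_len: "\<forall>c<n. length (?F ! c) \<le> k ! c + 1"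
    and perm: "mset (concat ?F) = mset [1..<Suc x]" and sorted: "\<forall>c<n. sorted (?F ! c)"
    and heads: "\<forall>c<ups x. D ! (hd (?F ! c) - 1) > 0 \<and> ups (hd (?F ! c) - 1) = c"
    and tails: "\<forall>c<n. \<forall>y\<in>set (tl (?F ! c)). D ! (y - 1) = -1"
    and height: "height x = int (\<Sum>c<ups x. k ! c + 1 - length (?F ! c))"
    using inv unfolding fill_inv_def by auto
  note G = fill_Suc_down[OF x down inv]
  have j: "?j < n" "?F ! ?j \<noteq> []" "length (?F ! ?j) < k ! ?j + 1"
    using G(2) len unfolding active_def by auto
  have "?j < ups x" using j empty by (meson not_le)
  have ups_Suc_x: "ups (Suc x) = ups x" using ups_Suc[OF x] down by simp
  have "D ! x = -1" using step_cases[OF x] down by simp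
  have G_nth: "?G ! c = (if c = ?j then ?F ! ?j @ [Suc x] else ?F ! c)" for c
    using G(1) len j(1) by simp
  have len_G: "length ?G = n" using G len by simp
  have empty_G: "\<forall>c<n. ?G ! c = [] \<longleftrightarrow> ups (Suc x) \<le> c"
    using empty ups_Suc_x \<open>?j < ups x\<close> by (auto simp: G_nth)
  have col_len_G: "\<forall>c<n. length (?G ! c) \<le> k ! c + 1"
    using col_len j(3) by (simp add: G_nth)
  have perm_sorted_G: "mset (concat ?G) = mset [1..<Suc (Suc x)]" "\<forall>c<n. sorted (?G ! c)"
    using snoc_column_mset_sorted[of ?j ?F x] G(1) len j(1) perm sorted by auto
  have heads_G: "\<forall>c<ups (Suc x). D ! (hd (?G ! c) - 1) > 0 \<and> ups (hd (?G ! c) - 1) = c"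
    using heads ups_Suc_x j(2) by (simp add: G_nth)
  have tails_G: "\<forall>c<n. \<forall>y\<in>set (tl (?G ! c)). D ! (y - 1) = -1"
    using tails j(2) \<open>D ! x = -1\<close> by (simp add: G_nth)
  let ?free = "\<lambda>F c. k ! c + 1 - length (F ! c)"
  have "(\<Sum>c<ups x. ?free ?F c) + ?free ?G ?j = (\<Sum>c<ups x. ?free ?G c) + ?free ?F ?j"
    using \<open>?j < ups x\<close> by (intro sum_cong_except) (auto simp: G_nth)
  moreover have "?free ?F ?j = ?free ?G ?j + 1"
    using j(3) by (simp add: G_nth)
  ultimately have "(\<Sum>c<ups x. ?free ?F c) = (\<Sum>c<ups x. ?free ?G c) + 1"
    by simp
  then have height_G: "height (Suc x) = int (\<Sum>c<ups (Suc x). ?free ?G c)"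
    using height_Suc[OF x] height \<open>D ! x = -1\<close> ups_Suc_x by simp
  show ?thesis unfolding fill_inv_def by (intro conjI len_G empty_G col_len_G perm_sorted_G heads_G tails_G height_G)
qed

lemma fill_inv: "x \<le> N \<Longrightarrow> fill_inv x"
proof (induction x)
  case 0
  show ?case by (rule fill_inv_0)
next
  case (Suc x)
  then have "x < N" "fill_inv x" by auto
  then show ?case using fill_inv_Suc_up fill_inv_Suc_down by blast
qed

lemma fill_Suc_snoc:
  assumes "x < N"
  shows "\<exists>j<n. fill (Suc x) = (fill x)[j := fill x ! j @ [Suc x]]"
proof (cases "D ! x > 0")
  case True
  then show ?thesis
    using fill_Suc_up[OF assms True fill_inv] assms by (intro exI[of _ "ups x"]) auto
next
  case False
  note down = fill_Suc_down[OF assms False fill_inv]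
  have "down_col x < n"
    using down(2) fill_inv[of x] assms unfolding active_def fill_inv_def by auto
  then show ?thesis using down(1) assms by auto
qed

lemma fill_prefix: "x \<le> y \<Longrightarrow> y \<le> N \<Longrightarrow> c < n \<Longrightarrow> \<exists>ys. fill y ! c = fill x ! c @ ys"
proof (induction y)
  case (Suc y)
  show ?case
  proof (cases "x = Suc y")
    case False
    then obtain ys where ys: "fill y ! c = fill x ! c @ ys" using Suc by fastforce
    obtain j where "j < n" "fill (Suc y) = (fill y)[j := fill y ! j @ [Suc y]]"
      using fill_Suc_snoc[OF Suc_le_lessD[OF Suc.prems(2)]] by blast
    moreover have "length (fill y) = n" using fill_inv[of y] Suc.prems(2) unfolding fill_inv_def by simp
    ultimately show ?thesis using ys by (cases "c = j") (auto simp: nth_list_update)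
  qed simp
qed simp

lemma fill_entry_range:
  assumes "x \<le> N" "c < n" "y \<in> set (fill x ! c)"
  shows "y \<in> {1..x}"
proof -
  have "length (fill x) = n" and perm: "mset (concat (fill x)) = mset [1..<Suc x]"
    using fill_inv[OF assms(1)] unfolding fill_inv_def by auto
  then have "fill x ! c \<in> set (fill x)" using assms(2) by simp
  then have "y \<in> set (concat (fill x))" using assms(3) by auto
  moreover have "set (concat (fill x)) = set [1..<Suc x]"
    using perm by (metis set_mset_mset)
  ultimately show ?thesis by (simp only: set_upt atLeastLessThanSuc_atLeastAtMost)
qed

definition T :: "nat list list" where
  "T = fill N"

lemma filling_eq_T: "filling k D = T"
  by (simp add: T_def fill_def filling_def)

lemma fill_inv_T: "fill_inv N"
  by (rule fill_inv) simp

lemma length_T: "length T = n"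
  using fill_inv_T unfolding fill_inv_def T_def by simp

lemma mset_concat_T: "mset (concat T) = mset [1..<Suc N]"
  using fill_inv_T unfolding fill_inv_def T_def by simp

lemma distinct_concat_T: "distinct (concat T)"
  using mset_concat_T by (metis distinct_upt mset_eq_imp_distinct_iff)

lemma set_concat_T: "set (concat T) = {1..N}"
  by (metis mset_concat_T atLeastLessThanSuc_atLeastAtMost set_mset_mset set_upt)

lemma length_column: "c < n \<Longrightarrow> length (T ! c) = k ! c + 1"
proof -
  assume "c < n"
  have col_len: "\<forall>c<n. length (T ! c) \<le> k ! c + 1"
    and "height N = int (\<Sum>c<ups N. k ! c + 1 - length (T ! c))"
    using fill_inv_T unfolding fill_inv_def T_def by auto
  then have "int (\<Sum>c<n. k ! c + 1 - length (T ! c)) = 0"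
    using height_N ups_N by simp
  then have "(\<Sum>c<n. k ! c + 1 - length (T ! c)) = 0"
    by (simp only: of_nat_eq_0_iff)
  then have "k ! c + 1 - length (T ! c) = 0"
    using \<open>c < n\<close> by (simp only: sum_eq_0_iff finite_lessThan lessThan_iff)
  then show ?thesis using col_len \<open>c < n\<close> by (meson diff_is_0_eq le_antisym)
qed

lemma sorted_column: "c < n \<Longrightarrow> sorted (T ! c)"
  using fill_inv_T unfolding fill_inv_def T_def by simp

lemma head_column: "c < n \<Longrightarrow> D ! (hd (T ! c) - 1) > 0 \<and> ups (hd (T ! c) - 1) = c"
  using fill_inv_T ups_N unfolding fill_inv_def T_def by simp

lemma tail_column: "c < n \<Longrightarrow> y \<in> set (tl (T ! c)) \<Longrightarrow> D ! (y - 1) = -1"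
  using fill_inv_T unfolding fill_inv_def T_def by simp

lemma entry_range: "c < n \<Longrightarrow> r < length (T ! c) \<Longrightarrow> T ! c ! r \<in> {1..N}"
  using set_concat_T length_T by (metis UN_I nth_mem set_concat)

lemma entry_position:
  assumes "y \<in> {1..N}"
  obtains c r where "c < n" "r < length (T ! c)" "T ! c ! r = y"
proof -
  obtain col where "col \<in> set T" "y \<in> set col"
    using assms set_concat_T by (metis UN_E set_concat)
  then show ?thesis using that length_T by (metis in_set_conv_nth)
qed

lemma col_of_row_of_entry:
  assumes "c < n" "r < length (T ! c)"
  shows "col_of T (T ! c ! r) = c" and "row_of T (T ! c ! r) = r"
proof -
  have disjoint: "c' = c" if "c' < n" "T ! c ! r \<in> set (T ! c')" for c'
    using distinct_concat_unique_index[OF distinct_concat_T] that assms length_T by simp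
  show col: "col_of T (T ! c ! r) = c"
    unfolding col_of_def using assms length_T disjoint
    by (intro Least_equality) auto
  have "distinct (T ! c)"
    using distinct_concat_T assms(1) length_T by (simp add: distinct_concat_iff)
  then show "row_of T (T ! c ! r) = r"
    unfolding row_of_def col using assms(2)
    by (intro Least_equality) (auto simp: nth_eq_iff_index_eq)
qed

lemma T_extends_fill:
  assumes "x \<le> N" "c < n" "r < length (fill x ! c)"
  shows "r < length (T ! c)" and "T ! c ! r = fill x ! c ! r"
proof -
  obtain ys where "T ! c = fill x ! c @ ys"
    using fill_prefix[of x N c] assms(1,2) unfolding T_def by auto
  then show "r < length (T ! c)" and "T ! c ! r = fill x ! c ! r"
    using assms(3) by (auto simp: nth_append)
qed

abbreviation col_top :: "nat \<Rightarrow> nat" where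
  "col_top c \<equiv> hd (T ! c)"

lemma col_top_eq_nth: "c < n \<Longrightarrow> col_top c = T ! c ! 0"
  using length_column[of c] by (cases "T ! c") auto

lemma col_top_le_entry: "c < n \<Longrightarrow> r < length (T ! c) \<Longrightarrow> col_top c \<le> T ! c ! r"
  using sorted_column col_top_eq_nth by (simp add: sorted_nth_mono)

lemma col_top_0: "col_top 0 = 1"
proof -
  have "col_top 0 \<ge> 1"
    using entry_range[OF n_pos, of 0] col_top_eq_nth[OF n_pos] length_column[OF n_pos] by simp
  moreover have "ups (col_top 0 - 1) = 0" using head_column[OF n_pos] by simp
  moreover have "ups (col_top 0 - 1) \<ge> 1" if "col_top 0 \<ge> 2"
    using ups_mono[of 1 "col_top 0 - 1"] ups_1 that by simp
  ultimately show ?thesis by linarith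
qed

lemma col_top_strict_mono:
  assumes "c < c'" "c' < n"
  shows "col_top c < col_top c'"
proof (rule ccontr)
  assume "\<not> col_top c < col_top c'"
  then have "ups (col_top c' - 1) \<le> ups (col_top c - 1)" by (intro ups_mono) simp
  then show False using head_column[of c] head_column[of c'] assms by simp
qed

section \<open>The ranking algorithm\<close>

lemma length_col_starts: "length (col_starts T i) = Suc i"
  by (induction i) (simp_all add: Let_def)

lemma col_starts_stable: "j \<le> i \<Longrightarrow> col_starts T i ! j = col_starts T j ! j"
proof (induction i)
  case (Suc i)
  then show ?case
    using length_col_starts[of i] by (cases "j = Suc i") (auto simp: Let_def nth_append)
qed simp

definition col_start :: "nat \<Rightarrow> nat" where
  "col_start c = col_starts T c ! c"

lemma col_start_0: "col_start 0 = 0"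
  by (simp add: col_start_def)

lemma col_start_Suc:
  "col_start (Suc c) = (let x = col_top (Suc c) - 1 in
     if col_of T x < Suc c then col_start (col_of T x) + row_of T x else 0)"
  using length_col_starts[of c] col_starts_stable[of _ c]
  by (simp add: col_start_def Let_def nth_append)

lemma rank_box_eq: "c < n \<Longrightarrow> rank_box T c r = col_start c + r"
  unfolding rank_box_def col_start_def using length_T col_starts_stable[of c "n - 1"] by simp

lemma rank_entry: "c < n \<Longrightarrow> r < length (T ! c) \<Longrightarrow> rank_idx T (T ! c ! r) = col_start c + r"
  unfolding rank_idx_def by (simp add: col_of_row_of_entry rank_box_eq)

lemma col_start_eq_rank_before_top:
  assumes "1 \<le> c" "c < n"
  shows "col_start c = rank_idx T (col_top c - 1)" and "col_top c \<ge> 2"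
proof -
  show "col_top c \<ge> 2" using col_top_strict_mono[of 0 c] col_top_0 assms by simp
  moreover have "col_top c \<in> {1..N}"
    using entry_range[OF assms(2), of 0] col_top_eq_nth[OF assms(2)] length_column[OF assms(2)] by simp
  ultimately have "col_top c - 1 \<in> {1..N}" by auto
  then obtain c' r' where pos: "c' < n" "r' < length (T ! c')" "T ! c' ! r' = col_top c - 1"
    by (rule entry_position)
  have "col_top c' < col_top c"
    using col_top_le_entry[OF pos(1,2)] pos(3) \<open>col_top c \<ge> 2\<close> by simp
  then have "c' < c" using col_top_strict_mono[of c c'] pos(1) by (metis less_asym nat_neq_iff)
  obtain d where "c = Suc d" using assms(1) by (cases c) auto
  then have "col_start c = col_start c' + r'"
    using col_start_Suc[of d] col_of_row_of_entry[OF pos(1,2)] pos(3) \<open>c' < c\<close> by simp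
  then show "col_start c = rank_idx T (col_top c - 1)"
    using rank_entry[OF pos(1,2)] pos(3) by simp
qed

lemma rank_fill_entry:
  assumes "x \<le> N" "c < n" "r < length (fill x ! c)"
  shows "rank_idx T (fill x ! c ! r) = col_start c + r"
  using rank_entry[OF assms(2) T_extends_fill(1)[OF assms]] T_extends_fill(2)[OF assms] by simp

text \<open>The second clause is what keeps the ranks increasing: the next down step goes below the
  smallest active entry and gets rank one more than that entry.\<close>
definition rank_inv :: "nat \<Rightarrow> bool" where
  "rank_inv x \<longleftrightarrow> mono_on {1..x} (rank_idx T)
     \<and> (\<forall>c. active x c \<longrightarrow> rank_idx T x \<le> rank_idx T (last (fill x ! c)) + 1)"

lemma rank_inv_1: "rank_inv 1"
proof -
  have "fill 1 = (fill 0)[0 := [1]]"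
    using fill_Suc_up[of 0] first_step_up fill_inv_0 ups_0 D_nonempty by simp
  then have "active 1 c \<Longrightarrow> c = 0 \<and> fill 1 ! c = [1]" for c
    unfolding active_def using n_pos by (auto simp: fill_0 nth_list_update split: if_splits)
  then show ?thesis unfolding rank_inv_def by (auto intro: mono_onI)
qed

lemma rank_inv_Suc_up:
  assumes "1 \<le> x" and x: "x < N" and up: "D ! x > 0" and inv: "rank_inv x"
  shows "rank_inv (Suc x)"
proof -
  let ?u = "ups x"
  note G = fill_Suc_up[OF x up fill_inv[OF less_imp_le[OF x]]]
  have len: "length (fill x) = n" using fill_inv[of x] x unfolding fill_inv_def by simp
  have "1 \<le> ?u" using ups_mono[OF \<open>1 \<le> x\<close>] ups_1 by simp
  have new_col: "fill (Suc x) ! ?u = [Suc x]" using G len by simp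
  then have "col_top ?u = Suc x"
    using T_extends_fill[of "Suc x" ?u 0] col_top_eq_nth G(3) x by simp
  then have same: "rank_idx T (Suc x) = rank_idx T x"
    using col_start_eq_rank_before_top[OF \<open>1 \<le> ?u\<close> G(3)] rank_entry[OF G(3), of 0]
      col_top_eq_nth[OF G(3)] length_column[OF G(3)] by simp
  have old_cols: "active x c" "fill (Suc x) ! c = fill x ! c" if "active (Suc x) c" "c \<noteq> ?u" for c
    using that G len unfolding active_def by auto
  have mono: "mono_on {1..x} (rank_idx T)" using inv unfolding rank_inv_def by simp
  have "mono_on {1..Suc x} (rank_idx T)"
    by (rule mono_on_atLeastAtMost_Suc[OF mono _ \<open>1 \<le> x\<close>]) (simp add: same)
  moreover have "rank_idx T (Suc x) \<le> rank_idx T (last (fill (Suc x) ! c)) + 1"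
    if "active (Suc x) c" for c
    using inv same new_col old_cols[OF that] unfolding rank_inv_def by (cases "c = ?u") auto
  ultimately show ?thesis unfolding rank_inv_def by blast
qed

lemma rank_inv_Suc_down:
  assumes "1 \<le> x" and x: "x < N" and down: "\<not> D ! x > 0" and inv: "rank_inv x"
  shows "rank_inv (Suc x)"
proof -
  let ?j = "down_col x" and ?F = "fill x"
  note G = fill_Suc_down[OF x down fill_inv[OF less_imp_le[OF x]]]
  have len: "length ?F = n" using fill_inv[of x] x unfolding fill_inv_def by simp
  have j: "?j < n" "?F ! ?j \<noteq> []" using G(2) len unfolding active_def by auto
  define r where "r = length (?F ! ?j)"
  have "r \<ge> 1" using j(2) unfolding r_def by (cases "?F ! ?j") auto
  have new_col: "fill (Suc x) ! ?j = ?F ! ?j @ [Suc x]" using G(1) j(1) len by simp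
  have "rank_idx T (Suc x) = col_start ?j + r"
    using rank_fill_entry[of "Suc x" ?j r] x j(1) new_col unfolding r_def by simp
  moreover have "rank_idx T (last (?F ! ?j)) = col_start ?j + (r - 1)"
    using rank_fill_entry[of x ?j "r - 1"] x j \<open>r \<ge> 1\<close> unfolding r_def
    by (simp add: last_conv_nth)
  ultimately have step: "rank_idx T (Suc x) = rank_idx T (last (?F ! ?j)) + 1"
    using \<open>r \<ge> 1\<close> by simp
  have mono: "mono_on {1..x} (rank_idx T)" using inv unfolding rank_inv_def by simp
  have last_range: "last (?F ! c) \<in> {1..x}" if "active x c" for c
    using that fill_entry_range[of x c "last (?F ! c)"] x len unfolding active_def by simp
  have "rank_idx T x \<le> rank_idx T (Suc x)" using inv G(2) step unfolding rank_inv_def by simp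
  then have "mono_on {1..Suc x} (rank_idx T)"
    by (rule mono_on_atLeastAtMost_Suc[OF mono _ \<open>1 \<le> x\<close>])
  moreover have "rank_idx T (Suc x) \<le> rank_idx T (last (fill (Suc x) ! c)) + 1"
    if "active (Suc x) c" for c
  proof (cases "c = ?j")
    case False
    then have "active x c" and same: "fill (Suc x) ! c = ?F ! c"
      using that G(1) len unfolding active_def by auto
    then have "rank_idx T (last (?F ! ?j)) \<le> rank_idx T (last (?F ! c))"
      using mono_onD[OF mono] last_range G(2,3) by blast
    then show ?thesis using step same by simp
  qed (simp add: new_col)
  ultimately show ?thesis unfolding rank_inv_def by blast
qed

lemma rank_inv:
  assumes "1 \<le> x" "x \<le> N"
  shows "rank_inv x"
  using assms(1)
proof (induction x rule: dec_induct)
  case base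
  show ?case by (rule rank_inv_1)
next
  case (step m)
  then have "1 \<le> m" "m < N" using assms(2) by auto
  then show ?case using step.IH rank_inv_Suc_up rank_inv_Suc_down by blast
qed

lemma rank_mono: "mono_on {1..N} (rank_idx T)"
  using rank_inv[of N] N_ge_2 unfolding rank_inv_def by simp

lemma next_rank_entry:
  assumes "c < n" "r < length (T ! c)"
  shows "next_rank k T (T ! c ! r) = (if r = 0 then col_start c + k ! c else col_start c + r - 1)"
  unfolding next_rank_def col_of_row_of_entry[OF assms] using rank_box_eq[OF assms(1)] by simp

lemma step_of_entry:
  assumes "c < n" "r < length (T ! c)"
  shows "D ! (T ! c ! r - 1) = (if r = 0 then int (k ! c) else -1)"
proof (cases "r = 0")
  case True
  have x: "T ! c ! 0 - 1 < N" using entry_range[OF assms(1), of 0] assms(2) True by auto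
  have "D ! (T ! c ! 0 - 1) > 0" "ups (T ! c ! 0 - 1) = c"
    using head_column[OF assms(1)] col_top_eq_nth[OF assms(1)] by simp_all
  then show ?thesis using up_step(2)[OF x] True by simp
next
  case False
  then have "r - 1 < length (tl (T ! c))" "tl (T ! c) ! (r - 1) = T ! c ! r"
    using assms(2) by (simp_all add: nth_tl)
  then have "T ! c ! r \<in> set (tl (T ! c))" by (metis nth_mem)
  then show ?thesis using tail_column[OF assms(1)] False by simp
qed

lemma next_rank_eq:
  assumes "y \<in> {1..N}"
  shows "int (next_rank k T y) = int (rank_idx T y) + D ! (y - 1)"
proof -
  obtain c r where pos: "c < n" "r < length (T ! c)" "T ! c ! r = y"
    using assms by (rule entry_position)
  show ?thesis
    using next_rank_entry[OF pos(1,2)] step_of_entry[OF pos(1,2)] rank_entry[OF pos(1,2)]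
    unfolding pos(3) by auto
qed

text \<open>The smallest index of a positive rank is not at the top of its column: otherwise the index
  just before it would have the same rank.\<close>
lemma next_rank_least:
  assumes y: "y \<in> {1..N}" and "rank_idx T y > 0"
    and least: "\<forall>z\<in>{1..N}. rank_idx T z = rank_idx T y \<longrightarrow> y \<le> z"
  shows "next_rank k T y = rank_idx T y - 1"
proof -
  obtain c r where pos: "c < n" "r < length (T ! c)" "T ! c ! r = y"
    using y by (rule entry_position)
  have "r \<noteq> 0"
  proof
    assume "r = 0"
    then have top: "y = col_top c" using pos col_top_eq_nth by simp
    show False
    proof (cases "c = 0")
      case True
      then show False using top col_top_0 rank_entry[OF pos(1,2)] pos(3) \<open>r = 0\<close> col_start_0
        \<open>rank_idx T y > 0\<close> by simp
    next
      case False
      then have "col_start c = rank_idx T (y - 1)" "y \<ge> 2"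
        using col_start_eq_rank_before_top[of c] pos(1) top by auto
      moreover have "rank_idx T y = col_start c"
        using rank_entry[OF pos(1,2)] pos(3) \<open>r = 0\<close> by simp
      moreover have "y - 1 \<in> {1..N}" using \<open>y \<ge> 2\<close> y by auto
      ultimately have "y \<le> y - 1" using least by simp
      then show False using \<open>y \<ge> 2\<close> by simp
    qed
  qed
  then show ?thesis using next_rank_entry[OF pos(1,2)] rank_entry[OF pos(1,2)] pos(3) by simp
qed

text \<open>Column \<open>c\<close> contributes the ranks \<open>col_start c + r\<close>, \<open>r \<le> k ! c\<close>, once as ranks and once
  as next ranks.\<close>
lemma rank_balanced:
  "image_mset (rank_idx T) (mset_set {1..N}) = image_mset (next_rank k T) (mset_set {1..N})"
proof -
  have column: "image_mset (rank_idx T) (mset col) = image_mset (next_rank k T) (mset col)"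
    if col: "col \<in> set T" for col
  proof -
    obtain c where c: "c < n" "col = T ! c"
      using col length_T by (auto simp: in_set_conv_nth)
    let ?s = "col_start c"
    have "map (rank_idx T) col = map (\<lambda>r. ?s + r) [0..<k ! c + 1]"
      using rank_entry[OF c(1)] length_column[OF c(1)] c(2)
      by (intro nth_equalityI) (auto simp del: upt_Suc)
    moreover have "map (next_rank k T) col = (?s + k ! c) # map (\<lambda>r. ?s + r) [0..<k ! c]"
      using next_rank_entry[OF c(1)] length_column[OF c(1)] c(2)
      by (intro nth_equalityI) (auto simp: nth_Cons' simp del: upt_Suc)
    ultimately show ?thesis by (simp flip: mset_map)
  qed
  have "mset_set {1..N} = mset (concat T)"
    by (simp only: mset_concat_T mset_upt atLeastLessThanSuc_atLeastAtMost)
  then show ?thesis using image_mset_concat_cong[OF column] by simp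
qed

section \<open>The walk visits every box\<close>

lemma rank_1: "rank_idx T 1 = 0"
  using rank_entry[OF n_pos, of 0] col_top_eq_nth[OF n_pos] col_top_0 col_start_0
    length_column[OF n_pos] by simp

lemma walk_word_eq: "walk_word k D = walk k T N N [Max {x \<in> {1..N}. rank_idx T x = 0}]"
  unfolding walk_word_def Let_def filling_eq_T ..

lemma walk_word_inv:
  shows "walk_inv k T N (walk_word k D)"
    and "\<forall>y\<in>{1..N}. rank_idx T y = next_rank k T (last (walk_word k D)) \<longrightarrow> y \<in> set (walk_word k D)"
    and "rank_idx T (hd (walk_word k D)) = 0"
proof -
  let ?S = "{x \<in> {1..N}. rank_idx T x = 0}"
  have "1 \<in> ?S" using rank_1 N_ge_2 by simp
  then have "Max ?S \<in> ?S" by (intro Max_in) auto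
  then have init: "walk_inv k T N [Max ?S]"
    unfolding walk_inv_def by (auto intro: Max_ge)
  show "walk_inv k T N (walk_word k D)"
    and "\<forall>y\<in>{1..N}. rank_idx T y = next_rank k T (last (walk_word k D)) \<longrightarrow> y \<in> set (walk_word k D)"
    using walk_inv_walk[OF init, of N] unfolding walk_word_eq by auto
  obtain ys where "walk_word k D = Max ?S # ys"
    using walk_append[of k T N N "[Max ?S]"] unfolding walk_word_eq by auto
  then show "rank_idx T (hd (walk_word k D)) = 0" using \<open>Max ?S \<in> ?S\<close> by simp
qed

lemma set_walk_word: "set (walk_word k D) = {1..N}"
proof (rule ccontr)
  let ?\<sigma> = "walk_word k D" and ?U = "{1..N} - set (walk_word k D)"
  assume "set ?\<sigma> \<noteq> {1..N}"
  have inv: "distinct ?\<sigma>" "set ?\<sigma> \<subseteq> {1..N}" "?\<sigma> \<noteq> []"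
    "\<forall>i. Suc i < length ?\<sigma> \<longrightarrow> rank_idx T (?\<sigma> ! Suc i) = next_rank k T (?\<sigma> ! i)"
    using walk_word_inv(1) unfolding walk_inv_def by auto
  then have "?U \<noteq> {}" using \<open>set ?\<sigma> \<noteq> {1..N}\<close> by auto
  note trail = stuck_trail_closed[OF finite_atLeastAtMost rank_balanced inv walk_word_inv(2)]
  have unused: "rank_idx T ` ?U = next_rank k T ` ?U"
    using arg_cong[OF trail(2), of set_mset] by simp
  define r where "r = Min (rank_idx T ` ?U)"
  have r_min: "r \<le> rank_idx T z" if "z \<in> ?U" for z
    unfolding r_def using that by simp
  have "r \<in> rank_idx T ` ?U"
    unfolding r_def using \<open>?U \<noteq> {}\<close> by (intro Min_in) auto
  then obtain y where y: "y \<in> ?U" "rank_idx T y = r" by auto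
  have "r \<noteq> 0"
    using y walk_word_inv(2,3) trail(1) by auto
  define m where "m = Min {z \<in> {1..N}. rank_idx T z = r}"
  have "m \<in> {z \<in> {1..N}. rank_idx T z = r}"
    unfolding m_def using y by (intro Min_in) auto
  then have m: "m \<in> {1..N}" "rank_idx T m = r" by auto
  have m_least: "\<forall>z\<in>{1..N}. rank_idx T z = rank_idx T m \<longrightarrow> m \<le> z"
    using m(2) unfolding m_def by (auto intro: Min_le)
  have "m \<notin> set ?\<sigma>"
  proof
    assume "m \<in> set ?\<sigma>"
    then have "y < m" using walk_inv_unvisited_below[OF walk_word_inv(1) y(1)] y(2) m(2) by simp
    then show False using m_least y m(2) by auto
  qed
  moreover have "next_rank k T m = r - 1"
    using next_rank_least[OF m(1)] m(2) m_least \<open>r \<noteq> 0\<close> by simp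
  ultimately have "r - 1 \<in> next_rank k T ` ?U" using m(1) by force
  then have "r - 1 \<in> rank_idx T ` ?U" unfolding unused .
  then show False using r_min \<open>r \<noteq> 0\<close> by fastforce
qed

lemma distinct_walk_word: "distinct (walk_word k D)"
  using walk_word_inv(1) unfolding walk_inv_def by simp

lemma length_walk_word: "length (walk_word k D) = N"
  using distinct_card[OF distinct_walk_word] set_walk_word by simp

section \<open>The sweep map undoes the walk\<close>

definition Dbar :: "int list" where
  "Dbar = map (\<lambda>c. D ! (c - 1)) (walk_word k D)"

lemma length_Dbar: "length Dbar = N"
  by (simp add: Dbar_def length_walk_word)

lemma step_rank_Dbar: "p < N \<Longrightarrow> step_rank Dbar p = int (rank_idx T (walk_word k D ! p))"
proof (induction p)
  case 0
  have "walk_word k D \<noteq> []" using 0 length_walk_word by auto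
  then show ?case using walk_word_inv(3) by (simp add: step_rank_def hd_conv_nth)
next
  case (Suc p)
  let ?c = "walk_word k D ! p"
  have "?c \<in> {1..N}" using set_walk_word length_walk_word Suc.prems nth_mem[of p "walk_word k D"] by simp
  have "step_rank Dbar (Suc p) = step_rank Dbar p + D ! (?c - 1)"
    using Suc.prems length_Dbar by (simp add: step_rank_def take_Suc_conv_app_nth Dbar_def)
  also have "\<dots> = int (next_rank k T ?c)"
    using Suc next_rank_eq[OF \<open>?c \<in> {1..N}\<close>] by simp
  also have "\<dots> = int (rank_idx T (walk_word k D ! Suc p))"
    using walk_word_inv(1) Suc.prems length_walk_word unfolding walk_inv_def by simp
  finally show ?case .
qed

lemma mset_walk_word: "mset (walk_word k D) = mset [1..<Suc N]"
  using set_eq_iff_mset_eq_distinct[OF distinct_walk_word, of "[1..<Suc N]"] set_walk_word by auto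

lemma mset_Dbar: "mset Dbar = mset D"
proof -
  have "mset Dbar = mset (map (\<lambda>c. D ! (c - 1)) [1..<Suc N])"
    unfolding Dbar_def mset_map mset_walk_word ..
  also have "map (\<lambda>c. D ! (c - 1)) [1..<Suc N] = D"
    by (rule nth_equalityI) (auto simp del: upt_Suc)
  finally show ?thesis .
qed

definition kbar :: "nat list" where
  "kbar = map nat (filter (\<lambda>a. a > 0) Dbar)"

lemma mset_kbar: "mset kbar = mset k"
proof -
  have "mset (filter (\<lambda>a. a > 0) Dbar) = mset (map int k)"
    using mset_Dbar filter_pos_D by (metis mset_filter)
  then have "mset kbar = image_mset nat (image_mset int (mset k))"
    unfolding kbar_def by simp
  then show ?thesis by (simp add: multiset.map_comp comp_def)
qed

lemma Dbar_in_Dpaths: "Dbar \<in> Dpaths kbar"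
proof -
  have "length kbar = n" "sum_list kbar = sum_list k"
    using mset_kbar by (metis size_mset, metis sum_mset_sum_list)
  moreover have "filter (\<lambda>a. a > 0) Dbar = map int kbar"
    unfolding kbar_def by (rule map_int_nat_filter_pos[symmetric])
  moreover have "set Dbar = set D" using mset_Dbar by (metis set_mset_mset)
  moreover have "\<forall>i<N. sum_list (take i Dbar) \<ge> 0"
    using step_rank_Dbar unfolding step_rank_def by simp
  ultimately show ?thesis
    using D_path length_Dbar unfolding Dpaths_def by auto
qed

definition walk_pos :: "nat \<Rightarrow> nat" where
  "walk_pos q = (THE j. j < N \<and> walk_word k D ! j = Suc q)"

lemma walk_pos:
  assumes "q < N"
  shows "walk_pos q < N" and "walk_word k D ! walk_pos q = Suc q"
proof -
  have "Suc q \<in> set (walk_word k D)" using set_walk_word assms by simp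
  then obtain j where j: "j < N" "walk_word k D ! j = Suc q"
    using length_walk_word by (auto simp: in_set_conv_nth)
  have "walk_pos q = j"
    unfolding walk_pos_def
  proof (rule the_equality)
    fix j' assume "j' < N \<and> walk_word k D ! j' = Suc q"
    then show "j' = j"
      using j nth_eq_iff_index_eq[OF distinct_walk_word, of j' j] length_walk_word by simp
  qed (use j in simp)
  then show "walk_pos q < N" and "walk_word k D ! walk_pos q = Suc q" using j by auto
qed

lemma walk_pos_nth:
  assumes "j < N"
  shows "walk_word k D ! j - 1 < N" and "walk_pos (walk_word k D ! j - 1) = j"
proof -
  have "walk_word k D ! j \<in> {1..N}"
    using set_walk_word length_walk_word assms nth_mem[of j "walk_word k D"] by simp
  then show q: "walk_word k D ! j - 1 < N" by auto
  have "walk_word k D ! walk_pos (walk_word k D ! j - 1) = walk_word k D ! j"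
    using walk_pos(2)[OF q] \<open>walk_word k D ! j \<in> {1..N}\<close> by simp
  then show "walk_pos (walk_word k D ! j - 1) = j"
    using walk_pos(1)[OF q] assms length_walk_word
      nth_eq_iff_index_eq[OF distinct_walk_word, of "walk_pos (walk_word k D ! j - 1)" j] by simp
qed

lemma sweep_key_mono:
  assumes "a \<le> b" "b < N"
  shows "(step_rank Dbar (walk_pos a), - int (walk_pos a))
    \<le> (step_rank Dbar (walk_pos b), - int (walk_pos b))"
proof -
  have key: "step_rank Dbar (walk_pos q) = int (rank_idx T (Suc q))" if "q < N" for q
    using step_rank_Dbar[OF walk_pos(1)[OF that]] walk_pos(2)[OF that] by simp
  have le: "rank_idx T (Suc a) \<le> rank_idx T (Suc b)"
    using mono_onD[OF rank_mono] assms by simp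
  have tie: "walk_pos b \<le> walk_pos a" if "rank_idx T (Suc a) = rank_idx T (Suc b)"
  proof (rule ccontr)
    assume "\<not> walk_pos b \<le> walk_pos a"
    then have "walk_pos a < walk_pos b" by simp
    then have "walk_word k D ! walk_pos b < walk_word k D ! walk_pos a"
      by (rule walk_inv_same_rank_decreasing[OF walk_word_inv(1)])
        (use walk_pos[of a] walk_pos[of b] assms that length_walk_word in auto)
    then show False using walk_pos(2) assms by simp
  qed
  show ?thesis
  proof (cases "rank_idx T (Suc a) = rank_idx T (Suc b)")
    case True
    then show ?thesis using tie key assms by (simp add: less_eq_prod_def)
  next
    case False
    then show ?thesis using le key assms by (simp add: less_eq_prod_def)
  qed
qed

lemma sweep_order_Dbar: "sweep_order Dbar = map walk_pos [0..<N]"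
proof -
  have set_eq: "set (map walk_pos [0..<N]) = set [0..<N]"
  proof
    show "set (map walk_pos [0..<N]) \<subseteq> set [0..<N]" using walk_pos(1) by auto
    show "set [0..<N] \<subseteq> set (map walk_pos [0..<N])"
    proof
      fix j assume "j \<in> set [0..<N]"
      then have "walk_word k D ! j - 1 \<in> set [0..<N]" "walk_pos (walk_word k D ! j - 1) = j"
        using walk_pos_nth by auto
      then show "j \<in> set (map walk_pos [0..<N])" by (metis image_eqI set_map)
    qed
  qed
  have "inj_on walk_pos (set [0..<N])"
  proof (rule inj_onI)
    fix a b assume a: "a \<in> set [0..<N]" and b: "b \<in> set [0..<N]"
      and eq: "walk_pos a = walk_pos b"
    have "Suc a = walk_word k D ! walk_pos a" using walk_pos(2)[of a] a by simp
    also have "\<dots> = Suc b" unfolding eq using walk_pos(2)[of b] b by simp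
    finally show "a = b" by simp
  qed
  then have "distinct (map walk_pos [0..<N])" by (simp add: distinct_map)
  then have perm: "mset [0..<N] = mset (map walk_pos [0..<N])"
    using set_eq_iff_mset_eq_distinct[OF distinct_upt] set_eq[symmetric] by blast
  define key where "key i = (step_rank Dbar i, - int i)" for i
  have sorted: "sorted (map key (map walk_pos [0..<N]))"
    unfolding sorted_iff_nth_mono key_def using sweep_key_mono by simp
  have "sort_key key [0..<N] = map walk_pos [0..<N]"
    by (rule sort_key_inj_key_eq[OF perm _ sorted]) (auto intro: inj_onI simp: key_def)
  then show ?thesis unfolding sweep_order_def length_Dbar key_def .
qed

lemma sweep_Dbar: "sweep Dbar = D"
proof -
  have "sweep Dbar = map (\<lambda>q. Dbar ! walk_pos q) [0..<N]"
    unfolding sweep_def sweep_order_Dbar by simp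
  also have "\<dots> = map (\<lambda>q. D ! q) [0..<N]"
    using walk_pos length_walk_word by (auto simp: Dbar_def)
  also have "\<dots> = D" by (rule map_nth)
  finally show ?thesis .
qed

lemma sweep_order_Dbar_walk_word: "j < N \<Longrightarrow> sweep_order Dbar ! (walk_word k D ! j - 1) = j"
  using sweep_order_Dbar walk_pos_nth by simp

end

theorem mainTheorem4:
  fixes k :: "nat list" and D :: "int list"
  assumes "length k \<ge> 1" and "\<forall>x\<in>set k. x > 0" and "D \<in> Dpaths k"
  shows "let N = length k + sum_list k; \<sigma> = walk_word k D;
             Dbar = map (\<lambda>c. D ! (c - 1)) \<sigma>
         in distinct \<sigma> \<and> set \<sigma> = {1..N}
            \<and> (\<exists>k'. mset k' = mset k \<and> Dbar \<in> Dpaths k')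
            \<and> sweep Dbar = D
            \<and> (\<forall>j<N. sweep_order Dbar ! (\<sigma> ! j - 1) = j)"
proof -
  interpret dyck_path k D using assms by unfold_locales
  show ?thesis
    unfolding Let_def length_D[symmetric] Dbar_def[symmetric]
    using distinct_walk_word set_walk_word mset_kbar Dbar_in_Dpaths sweep_Dbar
      sweep_order_Dbar_walk_word by blast
qed

end
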